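(* Let $n\ge1$, $\boldsymbol z\in\{0,1\}^n$ and $\boldsymbol y,\boldsymbol y'\in\overline{\mathbb R}^n$ satisfy $y_i\le y_i'$ whenever $z_i=1$ and $y_i\ge y_i'$ whenever $z_i=0$. Then $t_{\mathrm R,\phi}(\boldsymbol z,\boldsymbol y)\le t_{\mathrm R,\phi}(\boldsymbol z,\boldsymbol y')$, where $t_{\mathrm R,\phi}$ is either the rank-sum statistic or the Mann–Whitney-type statistic defined below.
   Context: $\overline{\mathbb R}=\mathbb R\cup\{\pm\infty\}$. For $1\le i,j\le n$ and $y,y'\in\overline{\mathbb R}$, $\psi_{i,j}(y,y')=\mathbf 1\{y>y'\}+\mathbf 1\{y=y'\}\mathbf 1\{i\ge j\}$; for $\boldsymbol y\in\overline{\mathbb R}^n$, $\mathrm{rank}_i(\boldsymbol y)=\sum_{j=1}^n\psi_{i,j}(y_i,y_j)$. $\phi$ is a fixed nondecreasing real function on the nonnegative integers. Rank-sum statistic: $t_{\mathrm R,\phi}(\boldsymbol z,\boldsymbol y)=\sum_{i=1}^nz_i\phi(\mathrm{rank}_i(\boldsymbol y))$. Mann–Whitney-type statistic: $t_{\mathrm R,\phi}(\boldsymbol z,\boldsymbol y)=\sum_{i=1}^nz_i\phi\big(\sum_{j=1}^n(1-z_j)\psi_{i,j}(y_i,y_j)\big)$. *)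

theory Defs
  imports "HOL-Library.Extended_Real"
begin

definition psi :: "nat \<Rightarrow> nat \<Rightarrow> ereal \<Rightarrow> ereal \<Rightarrow> nat" where
  "psi i j a b = (if a > b then 1 else 0) + (if a = b \<and> i \<ge> j then 1 else 0)"

definition rank :: "nat \<Rightarrow> nat \<Rightarrow> (nat \<Rightarrow> ereal) \<Rightarrow> nat" where
  "rank n i y = (\<Sum>j=1..n. psi i j (y i) (y j))"

text \<open>Rank-sum statistic; z takes values in {0,1} (natural numbers).\<close>
definition t_rank :: "(nat \<Rightarrow> real) \<Rightarrow> nat \<Rightarrow> (nat \<Rightarrow> nat) \<Rightarrow> (nat \<Rightarrow> ereal) \<Rightarrow> real" where
  "t_rank \<phi> n z y = (\<Sum>i=1..n. real (z i) * \<phi> (rank n i y))"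

definition t_mw :: "(nat \<Rightarrow> real) \<Rightarrow> nat \<Rightarrow> (nat \<Rightarrow> nat) \<Rightarrow> (nat \<Rightarrow> ereal) \<Rightarrow> real" where
  "t_mw \<phi> n z y = (\<Sum>i=1..n. real (z i) * \<phi> (\<Sum>j=1..n. (1 - z j) * psi i j (y i) (y j)))"

end

theory Submission
  imports Defs "HOL-Library.Product_Lexorder"
begin

text \<open>Breaking ties by the index, \<open>rank\<close> is the position of \<open>(y i, i)\<close> in the lexicographic
  order, so the ranks are a permutation of \<open>{1..n}\<close>. Raising treated responses and lowering
  control responses keeps every control that was below a treated unit below it. For the
  Mann--Whitney statistic this means that every treated unit has at least as many controls
  below it afterwards. For the rank sum over the treated set \<open>T\<close>, write
  \<open>\<phi>(rank i) = \<phi>(0) + \<Sum>r\<le>rank i. (\<phi>(r) - \<phi>(r-1))\<close> and swap the sums: it suffices that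
  \<open>#{i \<in> T. r \<le> rank i}\<close> does not decrease. The units of rank \<open>\<ge> r\<close> always number
  \<open>n - r + 1\<close>, so a treated unit could leave them only if a control entered, which would
  reverse a control below a treated unit.\<close>

definition lin_rank :: "('a \<Rightarrow> 'b::linorder) \<Rightarrow> 'a set \<Rightarrow> 'a \<Rightarrow> nat" where
  "lin_rank f S i = card {j \<in> S. f j \<le> f i}"

lemma lin_rank_le_lin_rank:
  assumes "finite S" and "\<And>j. j \<in> S \<Longrightarrow> f j \<le> f i \<Longrightarrow> g j \<le> g k"
  shows "lin_rank f S i \<le> lin_rank g S k"
  unfolding lin_rank_def using assms by (intro card_mono) auto

lemma lin_rank_mono: "finite S \<Longrightarrow> f i \<le> f k \<Longrightarrow> lin_rank f S i \<le> lin_rank f S k"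
  by (rule lin_rank_le_lin_rank) auto

lemma lin_rank_strict_mono:
  assumes "finite S" and "k \<in> S" and "f i < f k"
  shows "lin_rank f S i < lin_rank f S k"
proof -
  have "{j \<in> S. f j \<le> f i} \<subseteq> {j \<in> S. f j \<le> f k}"
    using assms(3) by (auto intro: order_trans less_imp_le)
  moreover have "k \<in> {j \<in> S. f j \<le> f k} - {j \<in> S. f j \<le> f i}"
    using assms(2,3) by auto
  ultimately show ?thesis
    unfolding lin_rank_def using assms(1) by (intro psubset_card_mono) auto
qed

lemma less_of_lin_rank_less: "finite S \<Longrightarrow> lin_rank f S i < lin_rank f S k \<Longrightarrow> f i < f k"
  using lin_rank_mono[of S f k i] by (meson leD linorder_le_less_linear)

lemma lin_rank_le_card: "finite S \<Longrightarrow> lin_rank f S i \<le> card S"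
  unfolding lin_rank_def by (intro card_mono) auto

lemma bij_betw_lin_rank:
  assumes "finite S" and "inj_on f S"
  shows "bij_betw (lin_rank f S) S {1..card S}"
proof -
  have "inj_on (lin_rank f S) S"
  proof (rule inj_onI)
    fix i k assume "i \<in> S" "k \<in> S" "lin_rank f S i = lin_rank f S k"
    then show "i = k"
      using assms lin_rank_strict_mono[of S i f k] lin_rank_strict_mono[of S k f i]
      by (metis inj_on_contraD less_irrefl linorder_neqE)
  qed
  moreover have "lin_rank f S ` S \<subseteq> {1..card S}"
  proof
    fix r assume "r \<in> lin_rank f S ` S"
    then obtain i where "i \<in> S" and r: "r = lin_rank f S i" by blast
    then have "{j \<in> S. f j \<le> f i} \<noteq> {}" by auto
    with \<open>finite S\<close> have "r \<ge> 1" unfolding r lin_rank_def by (simp add: Suc_le_eq card_gt_0_iff)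
    with \<open>finite S\<close> show "r \<in> {1..card S}" using r lin_rank_le_card by auto
  qed
  moreover have "card (lin_rank f S ` S) = card {1..card S}"
    using card_image[OF \<open>inj_on (lin_rank f S) S\<close>] by simp
  ultimately show ?thesis
    unfolding bij_betw_def by (simp add: card_subset_eq)
qed

lemma card_lin_rank_ge:
  assumes "finite S" and "inj_on f S"
  shows "card {i \<in> S. r \<le> lin_rank f S i} = card {k \<in> {1..card S}. r \<le> k}"
  by (rule bij_betw_same_card,
      rule bij_betw_Collect[OF bij_betw_lin_rank[OF assms], where Q = "\<lambda>k. r \<le> k"]) simp

lemma card_Int_le_card_Int:
  assumes "finite U" "finite U'" "card U = card U'" and "T \<inter> U \<subseteq> U' \<or> U' - T \<subseteq> U"
  shows "card (T \<inter> U) \<le> card (T \<inter> U')"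
  using assms(4)
proof
  assume "T \<inter> U \<subseteq> U'"
  then show ?thesis using assms(2) by (intro card_mono) auto
next
  assume "U' - T \<subseteq> U"
  then have "card (U' - T) \<le> card (U - T)" using assms(1) by (intro card_mono) auto
  moreover have "card U = card (U \<inter> T) + card (U - T)" "card U' = card (U' \<inter> T) + card (U' - T)"
    using assms(1,2) by (simp_all add: card_Int_Diff)
  ultimately show ?thesis using assms(3) by (simp add: Int_commute)
qed

lemma card_lin_rank_ge_mono:
  assumes "finite S" "inj_on f S" "inj_on g S" "T \<subseteq> S"
    and preserved: "\<And>c t. c \<in> S - T \<Longrightarrow> t \<in> T \<Longrightarrow> f c \<le> f t \<Longrightarrow> g c \<le> g t"
  shows "card {i \<in> T. r \<le> lin_rank f S i} \<le> card {i \<in> T. r \<le> lin_rank g S i}"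
proof -
  define U where "U = {i \<in> S. r \<le> lin_rank f S i}"
  define U' where "U' = {i \<in> S. r \<le> lin_rank g S i}"
  have "T \<inter> U \<subseteq> U' \<or> U' - T \<subseteq> U"
  proof (rule ccontr)
    assume "\<not> ?thesis"
    then obtain t c where t: "t \<in> T" "t \<in> U" "t \<notin> U'" and c: "c \<in> U'" "c \<notin> T" "c \<notin> U"
      by blast
    have "lin_rank f S c < lin_rank f S t" using t c by (auto simp: U_def U'_def)
    then have "f c \<le> f t" using assms(1) by (auto dest: less_of_lin_rank_less)
    then have "g c \<le> g t" using preserved t c by (auto simp: U'_def)
    then have "lin_rank g S c \<le> lin_rank g S t" by (rule lin_rank_mono[OF assms(1)])
    moreover have "lin_rank g S t < lin_rank g S c" using t c assms(4) by (auto simp: U_def U'_def)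
    ultimately show False by simp
  qed
  moreover have "card U = card U'"
    unfolding U_def U'_def using assms(1-3) by (simp add: card_lin_rank_ge)
  ultimately have "card (T \<inter> U) \<le> card (T \<inter> U')"
    using assms(1) by (intro card_Int_le_card_Int) (auto simp: U_def U'_def)
  moreover have "{i \<in> T. r \<le> lin_rank f S i} = T \<inter> U" "{i \<in> T. r \<le> lin_rank g S i} = T \<inter> U'"
    using assms(4) by (auto simp: U_def U'_def)
  ultimately show ?thesis by simp
qed

lemma telescope_of_bool:
  fixes \<phi> :: "nat \<Rightarrow> 'a::comm_ring_1"
  assumes "k \<le> n"
  shows "\<phi> k = \<phi> 0 + (\<Sum>r=1..n. of_bool (r \<le> k) * (\<phi> r - \<phi> (r - 1)))"
proof -
  have "(\<Sum>r=1..n. of_bool (r \<le> k) * (\<phi> r - \<phi> (r - 1))) = (\<Sum>r=1..k. \<phi> r - \<phi> (r - 1))"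
    using assms by (intro sum.mono_neutral_cong_right) auto
  also have "\<dots> = \<phi> k - \<phi> 0"
    by (induction k) auto
  finally show ?thesis by simp
qed

lemma sum_eq_level_set_sum:
  fixes \<phi> :: "nat \<Rightarrow> 'a::comm_ring_1"
  assumes "finite T" and "\<forall>i\<in>T. g i \<le> n"
  shows "(\<Sum>i\<in>T. \<phi> (g i))
    = of_nat (card T) * \<phi> 0 + (\<Sum>r=1..n. of_nat (card {i \<in> T. r \<le> g i}) * (\<phi> r - \<phi> (r - 1)))"
proof -
  have "(\<Sum>i\<in>T. \<phi> (g i))
      = (\<Sum>i\<in>T. \<phi> 0 + (\<Sum>r=1..n. of_bool (r \<le> g i) * (\<phi> r - \<phi> (r - 1))))"
    using assms(2) by (intro sum.cong refl telescope_of_bool) auto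
  also have "\<dots> = of_nat (card T) * \<phi> 0
      + (\<Sum>r=1..n. (\<Sum>i\<in>T. of_bool (r \<le> g i)) * (\<phi> r - \<phi> (r - 1)))"
    by (simp add: sum.distrib sum_distrib_right sum.swap[of _ T])
  finally show ?thesis
    using assms(1) by (simp add: Int_def)
qed

lemma sum_mono_of_level_sets:
  fixes \<phi> :: "nat \<Rightarrow> 'a::linordered_idom"
  assumes "mono \<phi>" and "finite T" and "\<forall>i\<in>T. g i \<le> n" and "\<forall>i\<in>T. h i \<le> n"
    and "\<And>r. card {i \<in> T. r \<le> g i} \<le> card {i \<in> T. r \<le> h i}"
  shows "(\<Sum>i\<in>T. \<phi> (g i)) \<le> (\<Sum>i\<in>T. \<phi> (h i))"
  unfolding sum_eq_level_set_sum[OF assms(2,3)] sum_eq_level_set_sum[OF assms(2,4)]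
  using assms(1,5) by (intro add_left_mono sum_mono mult_right_mono) (simp_all add: monoD)

lemma lex_le_shift:
  fixes a b a' b' :: "'a::linorder"
  assumes "(a, i) \<le> (b, j)" and "a' \<le> a" and "b \<le> b'"
  shows "(a', i) \<le> (b', j)"
  using assms by (auto intro: order.strict_trans1 order.strict_trans2 order_trans)

lemma psi_eq_lex: "psi i j a b = of_bool ((b, j) \<le> (a, i))"
  by (auto simp: psi_def)

lemma rank_eq_lin_rank: "rank n i y = lin_rank (\<lambda>j. (y j, j)) {1..n} i"
  unfolding rank_def lin_rank_def psi_eq_lex by (simp add: Int_def del: less_eq_prod_simp)

lemma t_rank_eq_sum_treated:
  assumes "\<forall>i\<in>{1..n}. z i \<in> {0, 1}"
  shows "t_rank \<phi> n z y = (\<Sum>i \<in> {i \<in> {1..n}. z i = 1}. \<phi> (lin_rank (\<lambda>j. (y j, j)) {1..n} i))"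
  unfolding t_rank_def rank_eq_lin_rank sum.inter_filter[OF finite_atLeastAtMost]
  using assms by (intro sum.cong) auto

lemma t_mw_eq_sum_treated:
  assumes "\<forall>i\<in>{1..n}. z i \<in> {0, 1}"
  shows "t_mw \<phi> n z y
    = (\<Sum>i \<in> {i \<in> {1..n}. z i = 1}. \<phi> (lin_rank (\<lambda>j. (y j, j)) {j \<in> {1..n}. z j = 0} i))"
proof -
  have "(\<Sum>j=1..n. (1 - z j) * psi i j (y i) (y j)) = lin_rank (\<lambda>j. (y j, j)) {j \<in> {1..n}. z j = 0} i" for i
  proof -
    have "(\<Sum>j=1..n. (1 - z j) * psi i j (y i) (y j))
        = (\<Sum>j=1..n. of_bool (z j = 0 \<and> (y j, j) \<le> (y i, i)))"
      using assms by (intro sum.cong) (auto simp: psi_eq_lex)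
    then show ?thesis
      unfolding lin_rank_def by (simp add: Int_def conj_assoc)
  qed
  then show ?thesis
    unfolding t_mw_def sum.inter_filter[OF finite_atLeastAtMost]
    using assms by (intro sum.cong) auto
qed

theorem lemma1:
  fixes \<phi> :: "nat \<Rightarrow> real" and n :: nat and z :: "nat \<Rightarrow> nat" and y y' :: "nat \<Rightarrow> ereal"
  assumes "mono \<phi>" and "n \<ge> 1"
    and "\<forall>i\<in>{1..n}. z i \<in> {0, 1}"
    and "\<forall>i\<in>{1..n}. z i = 1 \<longrightarrow> y i \<le> y' i"
    and "\<forall>i\<in>{1..n}. z i = 0 \<longrightarrow> y i \<ge> y' i"
  shows "t_rank \<phi> n z y \<le> t_rank \<phi> n z y' \<and> t_mw \<phi> n z y \<le> t_mw \<phi> n z y'"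
proof
  define T where "T = {i \<in> {1..n}. z i = 1}"
  define C where "C = {i \<in> {1..n}. z i = 0}"
  have "{1..n} - T = C" using assms(3) by (auto simp: T_def C_def)
  have preserved: "(y' c, c) \<le> (y' t, t)" if "c \<in> C" "t \<in> T" "(y c, c) \<le> (y t, t)" for c t
  proof (rule lex_le_shift[OF that(3)])
    show "y' c \<le> y c" using that(1) assms(5) by (simp add: C_def)
    show "y t \<le> y' t" using that(2) assms(4) by (simp add: T_def)
  qed
  have inj: "inj_on (\<lambda>j. (w j, j)) A" for w :: "nat \<Rightarrow> ereal" and A
    by (rule inj_onI) simp
  show "t_rank \<phi> n z y \<le> t_rank \<phi> n z y'"
    unfolding t_rank_eq_sum_treated[OF assms(3)] T_def[symmetric]
  proof (rule sum_mono_of_level_sets[OF assms(1)])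
    show "card {i \<in> T. r \<le> lin_rank (\<lambda>j. (y j, j)) {1..n} i}
        \<le> card {i \<in> T. r \<le> lin_rank (\<lambda>j. (y' j, j)) {1..n} i}" for r
      using preserved \<open>{1..n} - T = C\<close>
      by (intro card_lin_rank_ge_mono inj) (auto simp: T_def)
  qed (use lin_rank_le_card[of "{1..n}"] in \<open>auto simp: T_def\<close>)
  show "t_mw \<phi> n z y \<le> t_mw \<phi> n z y'"
    unfolding t_mw_eq_sum_treated[OF assms(3)] T_def[symmetric] C_def[symmetric]
  proof (intro sum_mono monoD[OF assms(1)])
    show "lin_rank (\<lambda>j. (y j, j)) C i \<le> lin_rank (\<lambda>j. (y' j, j)) C i" if "i \<in> T" for i
      using preserved that by (intro lin_rank_le_lin_rank) (auto simp: C_def)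
  qed
qed

end
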